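(* Let $n\ge2$, $k\in\{1,\dots,n\}$ and let $W_1,\dots,W_n$ be the Pauli strings on $n-1$ qubits defined in the context. Then for every $m\in\{1,\dots,n-1\}$, the operator $G_m=iW_{m+1}W_m$ is, up to sign, a Pauli string acting nontrivially on at most two qubits, and these lie among the adjacent qubits $m$ and $m+1$.
   Context: $X_j,Y_j,Z_j$ are Pauli operators on qubit $j$ of an $(n-1)$-qubit system; empty products of $Z$'s are the identity. For $k\ne n$: for $1\le j<k$, $W_j=Y_jZ_{j+1}\cdots Z_{k-1}Y_k$; $W_k=Z_k$; for $k<j<n$, $W_j=X_kZ_{k+1}\cdots Z_{j-1}X_j$; and $W_n=X_kZ_{k+1}\cdots Z_{n-1}$. For $k=n$: for $1\le j<n$, $W_j=-Z_1Z_2\cdots Z_{j-1}X_j$; $W_n=\prod_{j=1}^{n-1}Z_j$. *)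

theory Defs
  imports Complex_Main
begin

datatype pauli = PI | PX | PY | PZ

text \<open>2x2 Pauli matrices, rows/columns indexed by the computational basis
  False = |0>, True = |1>.\<close>
fun pmat :: "pauli \<Rightarrow> bool \<Rightarrow> bool \<Rightarrow> complex" where
  "pmat PI a b = (if a = b then 1 else 0)"
| "pmat PX a b = (if a \<noteq> b then 1 else 0)"
| "pmat PY a b = (if a = b then 0 else if a then \<i> else - \<i>)"
| "pmat PZ a b = (if a = b then (if a then -1 else 1) else 0)"

text \<open>Operators on an N-qubit system (qubits 1..N) as complex matrices indexed
  by computational basis states; a basis state is a bit assignment supported on {1..N}.\<close>
type_synonym qop = "(nat \<Rightarrow> bool) \<Rightarrow> (nat \<Rightarrow> bool) \<Rightarrow> complex"

definition basis :: "nat \<Rightarrow> (nat \<Rightarrow> bool) set" where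
  "basis N = {x. \<forall>j. x j \<longrightarrow> j \<in> {1..N}}"

definition op_mult :: "nat \<Rightarrow> qop \<Rightarrow> qop \<Rightarrow> qop" where
  "op_mult N A B = (\<lambda>x y. \<Sum>z\<in>basis N. A x z * B z y)"

definition op_scale :: "complex \<Rightarrow> qop \<Rightarrow> qop" where
  "op_scale c A = (\<lambda>x y. c * A x y)"

definition pstring :: "nat \<Rightarrow> (nat \<Rightarrow> pauli) \<Rightarrow> qop" where
  "pstring N P = (\<lambda>x y. \<Prod>j\<in>{1..N}. pmat (P j) (x j) (y j))"

definition Wstr :: "nat \<Rightarrow> nat \<Rightarrow> nat \<Rightarrow> (nat \<Rightarrow> pauli)" where
  "Wstr n k j =
    (if k \<noteq> n then
       (if j < k then (\<lambda>i. if i = j \<or> i = k then PY else if j < i \<and> i < k then PZ else PI)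
        else if j = k then (\<lambda>i. if i = k then PZ else PI)
        else if j < n then (\<lambda>i. if i = k \<or> i = j then PX else if k < i \<and> i < j then PZ else PI)
        else (\<lambda>i. if i = k then PX else if k < i \<and> i < n then PZ else PI))
     else
       (if j < n then (\<lambda>i. if 1 \<le> i \<and> i < j then PZ else if i = j then PX else PI)
        else (\<lambda>i. if 1 \<le> i \<and> i < n then PZ else PI)))"

definition Wsign :: "nat \<Rightarrow> nat \<Rightarrow> nat \<Rightarrow> complex" where
  "Wsign n k j = (if k = n \<and> j < n then -1 else 1)"

definition W :: "nat \<Rightarrow> nat \<Rightarrow> nat \<Rightarrow> qop" where
  "W n k j = op_scale (Wsign n k j) (pstring (n - 1) (Wstr n k j))"

end

theory Submission
  imports Defs "HOL-Library.FuncSet"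
begin

text \<open>Pauli strings multiply site by site: the product of two strings is a phase times the
  string of the letter-wise products. \<open>W\<^sub>m\<^sub>+\<^sub>1\<close> and \<open>W\<^sub>m\<close> carry the same letter at every qubit
  outside \<open>{m, m+1}\<close>, and equal letters multiply to the identity with phase \<open>1\<close>. At the
  qubits \<open>m\<close> and \<open>m+1\<close> the two strings anticommute at exactly one site, so the phase of
  \<open>W\<^sub>m\<^sub>+\<^sub>1 W\<^sub>m\<close> is \<open>\<plusminus>\<i>\<close> and that of \<open>\<i> W\<^sub>m\<^sub>+\<^sub>1 W\<^sub>m\<close> is \<open>\<plusminus>1\<close>.\<close>

fun pauli_mult :: "pauli \<Rightarrow> pauli \<Rightarrow> pauli" where
  "pauli_mult PI b = b"
| "pauli_mult a PI = a"
| "pauli_mult PX PX = PI" | "pauli_mult PY PY = PI" | "pauli_mult PZ PZ = PI"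
| "pauli_mult PX PY = PZ" | "pauli_mult PY PX = PZ"
| "pauli_mult PY PZ = PX" | "pauli_mult PZ PY = PX"
| "pauli_mult PZ PX = PY" | "pauli_mult PX PZ = PY"

fun pauli_phase :: "pauli \<Rightarrow> pauli \<Rightarrow> complex" where
  "pauli_phase PX PY = \<i>" | "pauli_phase PY PX = - \<i>"
| "pauli_phase PY PZ = \<i>" | "pauli_phase PZ PY = - \<i>"
| "pauli_phase PZ PX = \<i>" | "pauli_phase PX PZ = - \<i>"
| "pauli_phase a b = 1"

lemma pauli_mult_self [simp]: "pauli_mult a a = PI"
  by (cases a) simp_all

lemma pauli_phase_self: "pauli_phase a a = 1"
  by (cases a) simp_all

lemma pmat_mult_pmat:
  "(\<Sum>z\<in>UNIV. pmat a x z * pmat b z y) = pauli_phase a b * pmat (pauli_mult a b) x y"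
  by (cases a; cases b; cases x; cases y) (simp_all add: UNIV_bool)

lemma sum_basis_prod:
  "(\<Sum>z\<in>basis N. \<Prod>j\<in>{1..N}. F j (z j)) = (\<Prod>j\<in>{1..N}. \<Sum>b\<in>UNIV. F j b :: complex)"
proof -
  have "(\<Prod>j\<in>{1..N}. \<Sum>b\<in>UNIV. F j b) = (\<Sum>g\<in>{1..N} \<rightarrow>\<^sub>E UNIV. \<Prod>j\<in>{1..N}. F j (g j))"
    by (rule prod_sum_PiE) auto
  also have "\<dots> = (\<Sum>z\<in>basis N. \<Prod>j\<in>{1..N}. F j (z j))"
    by (rule sum.reindex_bij_witness[of _ "\<lambda>z. restrict z {1..N}" "\<lambda>g j. j \<in> {1..N} \<and> g j"])
       (auto simp: basis_def PiE_def extensional_def fun_eq_iff)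
  finally show ?thesis ..
qed

lemma op_scale_op_scale: "op_scale a (op_scale b A) = op_scale (a * b) A"
  by (simp add: op_scale_def fun_eq_iff)

lemma op_mult_op_scale:
  "op_mult N (op_scale a A) (op_scale b B) x y = a * b * op_mult N A B x y"
  by (simp add: op_mult_def op_scale_def sum_distrib_left mult_ac)

lemma op_mult_pstring:
  "op_mult N (pstring N P) (pstring N Q) x y
   = (\<Prod>j\<in>{1..N}. pauli_phase (P j) (Q j)) * pstring N (\<lambda>j. pauli_mult (P j) (Q j)) x y"
proof -
  have "op_mult N (pstring N P) (pstring N Q) x y
      = (\<Sum>z\<in>basis N. \<Prod>j\<in>{1..N}. pmat (P j) (x j) (z j) * pmat (Q j) (z j) (y j))"
    by (simp add: op_mult_def pstring_def prod.distrib)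
  also have "\<dots> = (\<Prod>j\<in>{1..N}. pauli_phase (P j) (Q j) * pmat (pauli_mult (P j) (Q j)) (x j) (y j))"
    by (subst sum_basis_prod) (simp only: pmat_mult_pmat)
  finally show ?thesis
    by (simp add: pstring_def prod.distrib)
qed

lemma op_mult_pstring_agree_outside:
  assumes "\<And>j. j \<notin> S \<Longrightarrow> P j = Q j"
  shows "op_mult N (pstring N P) (pstring N Q) x y
     = (\<Prod>j\<in>{1..N} \<inter> S. pauli_phase (P j) (Q j))
       * pstring N (\<lambda>j. if j \<in> S then pauli_mult (P j) (Q j) else PI) x y"
proof -
  have "(\<Prod>j\<in>{1..N}. pauli_phase (P j) (Q j)) = (\<Prod>j\<in>{1..N} \<inter> S. pauli_phase (P j) (Q j))"
    by (rule prod.mono_neutral_right) (auto simp: assms pauli_phase_self)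
  moreover have "pstring N (\<lambda>j. pauli_mult (P j) (Q j))
      = pstring N (\<lambda>j. if j \<in> S then pauli_mult (P j) (Q j) else PI)"
    unfolding pstring_def by (intro ext prod.cong) (auto simp: assms)
  ultimately show ?thesis
    by (simp add: op_mult_pstring)
qed

lemma Wstr_Suc_agree_outside:
  assumes "j \<notin> {m, m+1}"
  shows "Wstr n k (m+1) j = Wstr n k m j"
  using assms by (auto simp: Wstr_def)

lemma Wstr_Suc_anticommute:
  assumes "n \<ge> 2" and "k \<in> {1..n}" and "m \<in> {1..n-1}"
  shows "(\<Prod>j\<in>{1..n-1} \<inter> {m, m+1}. pauli_phase (Wstr n k (m+1) j) (Wstr n k m j)) \<in> {\<i>, -\<i>}"
proof -
  have "{1..n-1} \<inter> {m, m+1} = (if m + 1 < n then {m, m+1} else {m})"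
    using assms by auto
  then show ?thesis
    using assms by (auto simp: Wstr_def)
qed

theorem lemma4:
  fixes n k m :: nat
  assumes "n \<ge> 2" and "k \<in> {1..n}" and "m \<in> {1..n-1}"
  shows "\<exists>(P :: nat \<Rightarrow> pauli) (s :: complex). (s = 1 \<or> s = -1)
           \<and> (\<forall>i. i \<notin> {m, m+1} \<longrightarrow> P i = PI)
           \<and> (\<forall>x\<in>basis (n-1). \<forall>y\<in>basis (n-1).
                op_mult (n-1) (op_scale \<i> (W n k (m+1))) (W n k m) x y
                  = s * pstring (n-1) P x y)"
proof -
  define A where "A = Wstr n k (m+1)"
  define B where "B = Wstr n k m"
  define phase where "phase = (\<Prod>j\<in>{1..n-1} \<inter> {m, m+1}. pauli_phase (A j) (B j))"
  define s where "s = \<i> * Wsign n k (m+1) * Wsign n k m * phase"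
  define P where "P = (\<lambda>j. if j \<in> {m, m+1} then pauli_mult (A j) (B j) else PI)"
  have agree: "A j = B j" if "j \<notin> {m, m+1}" for j
    using that unfolding A_def B_def by (rule Wstr_Suc_agree_outside)
  have product: "op_mult (n-1) (pstring (n-1) A) (pstring (n-1) B) x y = phase * pstring (n-1) P x y"
    for x y
    unfolding phase_def P_def using agree by (rule op_mult_pstring_agree_outside)
  have "op_mult (n-1) (op_scale \<i> (W n k (m+1))) (W n k m) x y = s * pstring (n-1) P x y" for x y
    unfolding W_def op_scale_op_scale op_mult_op_scale A_def[symmetric] B_def[symmetric] product s_def
    by (simp only: mult.assoc)
  moreover have "s = 1 \<or> s = -1"
    using Wstr_Suc_anticommute[OF assms] by (auto simp: s_def phase_def A_def B_def Wsign_def)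
  ultimately show ?thesis
    by (intro exI[of _ P] exI[of _ s]) (auto simp: P_def)
qed

end
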